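(* Let $\mathcal{Y}$ be a Hilbert space (identified with its dual) and let $\mathcal{X}=\mathcal{Z}^*$ be the dual space of a Banach space $\mathcal{Z}$, such that weak-star convergence in $\mathcal{X}$ is metrizable on bounded sets. Let $B:\mathcal{Y}\to\mathcal{Z}$ be a bounded linear operator and $A=B^*:\mathcal{X}\to\mathcal{Y}$. Let $J:\mathcal{X}\to\mathbb{R}\cup\{\infty\}$ be convex and absolutely one-homogeneous, and the convex conjugate of a proper functional on $\mathcal{Z}$, and assume that $u\mapsto \frac12\|Au\|_{\mathcal{Y}}^2+J(u)$ is coercive on $\mathcal{X}$. Let $f\in\mathcal{Y}$. Let $p\in\partial J(0)\cap\mathcal{Z}\subset\mathcal{X}^*$ be such that there exist $w\in\mathcal{Y}$ and $0<\tau<1$ with $$J^*\Big(\frac{p-Bw}{\tau}\Big)=0.$$ Then there exists a minimizer of $$\min_{u\in\mathcal{X}}\ \frac12\|Au-f\|_{\mathcal{Y}}^2\quad\text{subject to}\quad J(u)-\langle p,u\rangle=0.$$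
   Context: $J$ absolutely one-homogeneous means $J(\lambda u)=|\lambda|J(u)$ for all $\lambda\in\mathbb{R}$, $u\in\mathcal{X}$. $J^*$ denotes the convex conjugate of $J$, $J^*(r)=\sup_{u\in\mathcal{X}}\langle r,u\rangle-J(u)$ for $r\in\mathcal{X}^*$. $\partial J(0)$ is the convex subdifferential of $J$ at $0$; $\mathcal{Z}$ is regarded as a subspace of $\mathcal{X}^*=\mathcal{Z}^{**}$. *)

theory Defs
  imports "HOL-Analysis.Analysis" "HOL-Library.Extended_Real"
begin

text \<open>The dual space X = Z^* is modelled as the Banach space of bounded linear
functionals 'z \<Rightarrow>L real.  The duality pairing <u, z> is  blinfun_apply u z.\<close>

definition weak_star_topology :: "('z::real_normed_vector \<Rightarrow>\<^sub>L real) topology" where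
  "weak_star_topology =
     topology_generated_by {{u. blinfun_apply u z \<in> U} | z U. open (U::real set)}"

definition weak_star_metrizable_on_bounded :: "('z::real_normed_vector \<Rightarrow>\<^sub>L real) itself \<Rightarrow> bool" where
  "weak_star_metrizable_on_bounded _ \<longleftrightarrow>
     (\<forall>S :: ('z \<Rightarrow>\<^sub>L real) set. bounded S \<longrightarrow>
        metrizable_space (subtopology weak_star_topology S))"

definition convex_ereal :: "('a::real_vector \<Rightarrow> ereal) \<Rightarrow> bool" where
  "convex_ereal J \<longleftrightarrow>
     (\<forall>u v t. 0 \<le> t \<and> t \<le> 1 \<longrightarrow>
        J (t *\<^sub>R u + (1 - t) *\<^sub>R v) \<le> ereal t * J u + ereal (1 - t) * J v)"

definition abs_one_homogeneous :: "('a::real_vector \<Rightarrow> ereal) \<Rightarrow> bool" where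
  "abs_one_homogeneous J \<longleftrightarrow> (\<forall>(l::real) u. J (l *\<^sub>R u) = ereal \<bar>l\<bar> * J u)"

definition proper_fun :: "('a \<Rightarrow> ereal) \<Rightarrow> bool" where
  "proper_fun G \<longleftrightarrow> (\<forall>z. G z \<noteq> -\<infinity>) \<and> (\<exists>z. G z \<noteq> \<infinity>)"

definition conj_on_dual :: "('z::real_normed_vector \<Rightarrow> ereal) \<Rightarrow> ('z \<Rightarrow>\<^sub>L real) \<Rightarrow> ereal" where
  "conj_on_dual G u = (SUP z. ereal (blinfun_apply u z) - G z)"

definition conj_at_predual :: "(('z::real_normed_vector \<Rightarrow>\<^sub>L real) \<Rightarrow> ereal) \<Rightarrow> 'z \<Rightarrow> ereal" where
  "conj_at_predual J r = (SUP u. ereal (blinfun_apply u r) - J u)"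

definition coercive_ereal :: "('a::real_normed_vector \<Rightarrow> ereal) \<Rightarrow> bool" where
  "coercive_ereal F \<longleftrightarrow> (\<forall>M::real. \<exists>R::real. \<forall>u. R \<le> norm u \<longrightarrow> ereal M \<le> F u)"

definition in_subdiff_at_0 :: "(('z::real_normed_vector \<Rightarrow>\<^sub>L real) \<Rightarrow> ereal) \<Rightarrow> 'z \<Rightarrow> bool" where
  "in_subdiff_at_0 J p \<longleftrightarrow> J 0 \<noteq> \<infinity> \<and> (\<forall>u. J u \<ge> J 0 + ereal (blinfun_apply u p))"

end

theory Submission
  imports Defs
begin

text \<open>
  Call u feasible if J u \<le> <u, p>; since p \<in> \<partial>J(0) and J 0 = 0, this is the
  constraint J u = <u, p>. As J is the conjugate of a functional on Z, the feasible set
  is an intersection of weak-star closed half-spaces, and u \<mapsto> \<parallel>A u - f\<parallel> has weak-star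
  closed sublevel sets because A is the adjoint of B. The source condition says
  <u, p - B w> \<le> \<tau> J u for all u, so a feasible u satisfies
  (1 - \<tau>) <u, p> \<le> <A u, w>: the regulariser is controlled by the data term on
  feasible points, and coercivity confines a sublevel set of the data term within the
  feasible set to a norm ball. By Banach-Alaoglu that ball is weak-star compact, and a
  function with closed sublevel sets attains its minimum on a compact set.

  Compactness is used through finite subcovers, not sequences.
\<close>

lemma lower_semicontinuous_attains_min_on_compactin:
  fixes \<phi> :: "'a \<Rightarrow> real"
  assumes K: "compactin X K" "K \<noteq> {}"
    and lsc: "\<And>s. closedin X {x \<in> topspace X. \<phi> x \<le> s}"
  shows "\<exists>x\<in>K. \<forall>y\<in>K. \<phi> x \<le> \<phi> y"
proof (rule ccontr)
  assume "\<not> ?thesis"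
  then have less: "\<forall>x\<in>K. \<exists>y\<in>K. \<phi> y < \<phi> x"
    by (auto simp: not_le)
  define U where "U y = topspace X - {x \<in> topspace X. \<phi> x \<le> \<phi> y}" for y
  have "K \<subseteq> \<Union> (U ` K)"
    using less compactin_subset_topspace[OF K(1)] by (fastforce simp: U_def)
  moreover have "\<forall>V \<in> U ` K. openin X V"
    using lsc by (auto simp: U_def)
  ultimately obtain \<F> where "finite \<F>" "\<F> \<subseteq> U ` K" "K \<subseteq> \<Union>\<F>"
    using K(1) unfolding compactin_def by meson
  then obtain Y where Y: "Y \<subseteq> K" "finite Y" "K \<subseteq> \<Union> (U ` Y)"
    by (metis finite_subset_image)
  with K(2) have "Y \<noteq> {}" by blast
  have "Min (\<phi> ` Y) \<in> \<phi> ` Y"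
    using Y(2) \<open>Y \<noteq> {}\<close> by (intro Min_in) auto
  then obtain y0 where y0: "y0 \<in> Y" "\<phi> y0 = Min (\<phi> ` Y)"
    by auto
  then obtain y where "y \<in> Y" "y0 \<in> U y"
    using Y by blast
  with y0 Y(2) show False
    by (auto simp: U_def dest: Min_le[of "\<phi> ` Y"])
qed

lemma direct_method_closedin:
  fixes \<phi> :: "'a \<Rightarrow> real"
  assumes F: "closedin X F" "x0 \<in> F"
    and lsc: "\<And>s. closedin X {x \<in> topspace X. \<phi> x \<le> s}"
    and C: "compactin X C" "{x \<in> F. \<phi> x \<le> \<phi> x0} \<subseteq> C"
  shows "\<exists>x\<in>F. \<forall>y\<in>F. \<phi> x \<le> \<phi> y"
proof -
  define K where "K = {x \<in> F. \<phi> x \<le> \<phi> x0}"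
  have "K = F \<inter> {x \<in> topspace X. \<phi> x \<le> \<phi> x0}"
    using closedin_subset[OF F(1)] by (auto simp: K_def)
  then have "compactin X K"
    using closed_compactin[OF C[folded K_def]] F(1) lsc by auto
  moreover have "K \<noteq> {}"
    using F(2) by (auto simp: K_def)
  ultimately have "\<exists>x\<in>K. \<forall>y\<in>K. \<phi> x \<le> \<phi> y"
    by (rule lower_semicontinuous_attains_min_on_compactin[OF _ _ lsc])
  then show ?thesis
    unfolding K_def by force
qed

lemma weak_star_subbasis_Union:
  "\<Union>{{u::'z::real_normed_vector \<Rightarrow>\<^sub>L real. blinfun_apply u z \<in> U} | z U. open (U::real set)} = UNIV"
  by auto

lemma topspace_weak_star [simp]:
  "topspace (weak_star_topology :: ('z::real_normed_vector \<Rightarrow>\<^sub>L real) topology) = UNIV"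
  unfolding weak_star_topology_def
  by (simp only: topology_generated_by_topspace weak_star_subbasis_Union)

lemma closedin_weak_star_halfspace:
  "closedin weak_star_topology {u::'z::real_normed_vector \<Rightarrow>\<^sub>L real. blinfun_apply u z \<le> a}"
proof -
  have "openin weak_star_topology {u::'z \<Rightarrow>\<^sub>L real. blinfun_apply u z \<in> {a<..}}"
    unfolding weak_star_topology_def by (rule topology_generated_by_Basis) (blast intro: open_greaterThan)
  moreover have "{u. blinfun_apply u z \<in> {a<..}} = UNIV - {u. blinfun_apply u z \<le> a}"
    by auto
  ultimately show ?thesis
    by (simp add: closedin_def)
qed

lemma compact_bounded_linear_functionals:
  "compact {g::'z::real_normed_vector \<Rightarrow> real. linear g \<and> (\<forall>z. g z \<in> {-(R * norm z)..R * norm z})}"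
proof -
  have "compactin (product_topology (\<lambda>_. euclideanreal) UNIV)
          (PiE UNIV (\<lambda>z::'z. {-(R * norm z)..R * norm z}))"
    by (simp add: compactin_PiE)
  then have box: "compact {g::'z \<Rightarrow> real. \<forall>z. g z \<in> {-(R * norm z)..R * norm z}}"
    by (simp add: euclidean_product_topology PiE_UNIV_domain Pi_def)
  have "closed {g::'z \<Rightarrow> real. \<forall>x y. g (x + y) = g x + g y}"
    "closed {g::'z \<Rightarrow> real. \<forall>c x. g (c *\<^sub>R x) = c * g x}"
    by (intro closed_Collect_all closed_Collect_eq continuous_intros
        continuous_on_product_coordinates)+
  then have "closed {g::'z \<Rightarrow> real. linear g}"
    by (simp add: linear_iff Collect_conj_eq closed_Int)
  with box show ?thesis
    by (simp add: Collect_conj_eq closed_Int_compact)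
qed

theorem compactin_weak_star_closed_ball:
  fixes R :: real
  assumes "0 \<le> R"
  shows "compactin weak_star_topology {u::'z::real_normed_vector \<Rightarrow>\<^sub>L real. norm u \<le> R}"
proof -
  define K where "K = {g::'z \<Rightarrow> real. linear g \<and> (\<forall>z. g z \<in> {-(R * norm z)..R * norm z})}"
  have bl: "bounded_linear g" if "g \<in> K" for g
    using that unfolding K_def
    by (intro bounded_linear_intro[where K=R])
      (auto simp: linear_add linear_scale abs_le_iff mult.commute, smt (verit))
  then have app: "blinfun_apply (Blinfun g) = g" if "g \<in> K" for g
    using that by (simp add: bounded_linear_Blinfun_apply)
  have cont: "continuous_map (subtopology euclidean K) weak_star_topology Blinfun"
    unfolding weak_star_topology_def
  proof (rule continuous_on_generated_topo)
    fix U assume "U \<in> {{u::'z \<Rightarrow>\<^sub>L real. blinfun_apply u z \<in> U} | z U. open (U::real set)}"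
    then obtain z V where U: "U = {u. blinfun_apply u z \<in> V}" and V: "open V"
      by blast
    have "Blinfun -` U \<inter> topspace (subtopology euclidean K) = {g. g z \<in> V} \<inter> K"
      using app by (auto simp: U)
    moreover have "open {g::'z \<Rightarrow> real. g z \<in> V}"
      using open_vimage[OF V continuous_on_product_coordinates[of z]] by (simp add: vimage_def)
    ultimately show "openin (subtopology euclidean K) (Blinfun -` U \<inter> topspace (subtopology euclidean K))"
      by (auto simp: openin_subtopology)
  qed (simp only: weak_star_subbasis_Union, simp)
  have "Blinfun ` K = {u. norm u \<le> R}"
  proof (intro equalityI subsetI)
    fix u assume "u \<in> Blinfun ` K"
    then obtain g where "g \<in> K" "u = Blinfun g"
      by blast
    have "norm (blinfun_apply u z) \<le> R * norm z" for z
    proof -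
      have "g z \<in> {-(R * norm z)..R * norm z}"
        using \<open>g \<in> K\<close> by (simp add: K_def)
      then show ?thesis
        using app[OF \<open>g \<in> K\<close>] \<open>u = Blinfun g\<close> by (auto simp: abs_le_iff)
    qed
    then show "u \<in> {u. norm u \<le> R}"
      using \<open>0 \<le> R\<close> by (simp add: norm_blinfun_bound)
  next
    fix u :: "'z \<Rightarrow>\<^sub>L real" assume "u \<in> {u. norm u \<le> R}"
    then have "\<bar>blinfun_apply u z\<bar> \<le> R * norm z" for z
      using norm_blinfun[of u z] mult_right_mono[of "norm u" R "norm z"] by simp
    moreover have "linear (blinfun_apply u)"
      using blinfun.bounded_linear_right bounded_linear.linear by blast
    ultimately have "blinfun_apply u \<in> K"
      unfolding K_def by (simp add: abs_le_iff minus_le_iff)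
    then show "u \<in> Blinfun ` K"
      by (metis blinfun_apply_inverse image_eqI)
  qed
  moreover have "compactin weak_star_topology (Blinfun ` K)"
    using compact_bounded_linear_functionals[of R]
    by (intro image_compactin[OF _ cont]) (simp add: compactin_subtopology K_def)
  ultimately show ?thesis
    by simp
qed

lemma closedin_weak_star_conj_on_dual_le:
  "closedin weak_star_topology {u. conj_on_dual G u \<le> ereal (blinfun_apply u p)}"
proof -
  define S where "S z = {u. ereal (blinfun_apply u z) - G z \<le> ereal (blinfun_apply u p)}" for z
  have "closedin weak_star_topology (S z)" for z
  proof (cases "G z")
    case (real g)
    then have "S z = {u. blinfun_apply u (z - p) \<le> g}"
      by (auto simp: S_def blinfun.diff_right)
    then show ?thesis
      by (simp add: closedin_weak_star_halfspace)
  next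
    case PInf
    then have "S z = topspace weak_star_topology"
      by (simp add: S_def)
    then show ?thesis
      by (metis closedin_topspace)
  qed (simp add: S_def)
  moreover have "{u. conj_on_dual G u \<le> ereal (blinfun_apply u p)} = (\<Inter>z. S z)"
    by (auto simp: S_def conj_on_dual_def SUP_le_iff)
  ultimately show ?thesis
    by auto
qed

lemma closedin_weak_star_adjoint_residual_le:
  fixes B :: "'y::real_inner \<Rightarrow>\<^sub>L 'z::real_normed_vector"
    and A :: "('z \<Rightarrow>\<^sub>L real) \<Rightarrow> 'y"
  assumes adj: "\<And>u y. inner (A u) y = blinfun_apply u (blinfun_apply B y)"
  shows "closedin weak_star_topology {u. norm (A u - f) \<le> s}"
proof -
  have residual: "inner (A u - f) y = blinfun_apply u (blinfun_apply B y) - inner f y" for u y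
    by (simp add: adj inner_diff_left)
  define H where "H y = {u. blinfun_apply u (blinfun_apply B y) \<le> s + inner f y}" for y
  have "{u. norm (A u - f) \<le> s} = (\<Inter>y\<in>{y. norm y \<le> 1}. H y)"
  proof (intro equalityI subsetI)
    fix u assume u: "u \<in> {u. norm (A u - f) \<le> s}"
    have "blinfun_apply u (blinfun_apply B y) \<le> s + inner f y" if "norm y \<le> 1" for y
    proof -
      have "inner (A u - f) y \<le> norm (A u - f) * norm y"
        by (rule norm_cauchy_schwarz)
      also have "\<dots> \<le> norm (A u - f)"
        using that by (simp add: mult_left_le)
      finally show ?thesis
        using u residual[of u y] by simp
    qed
    then show "u \<in> (\<Inter>y\<in>{y. norm y \<le> 1}. H y)"
      by (simp add: H_def)
  next
    fix u assume "u \<in> (\<Inter>y\<in>{y. norm y \<le> 1}. H y)"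
    then have "blinfun_apply u (blinfun_apply B (sgn (A u - f))) \<le> s + inner f (sgn (A u - f))"
      by (simp add: H_def norm_sgn)
    then have "inner (A u - f) (sgn (A u - f)) \<le> s"
      by (simp add: residual)
    moreover have "inner x (sgn x) = norm x" for x :: 'y
      by (cases "x = 0") (simp_all add: sgn_div_norm power2_norm_eq_inner[symmetric] power2_eq_square)
    ultimately show "u \<in> {u. norm (A u - f) \<le> s}"
      by simp
  qed
  moreover have "closedin weak_star_topology (H y)" for y
    by (simp add: H_def closedin_weak_star_halfspace)
  moreover have "{y::'y. norm y \<le> 1} \<noteq> {}"
    by (auto intro: exI[of _ 0])
  ultimately show ?thesis
    by (metis closedin_INT)
qed

lemma abs_one_homogeneous_zero:
  assumes "abs_one_homogeneous J"
  shows "J 0 = 0"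
  using assms[unfolded abs_one_homogeneous_def, rule_format, of 0 0]
  by (simp add: zero_ereal_def[symmetric])

lemma in_subdiff_at_0_pairing_le:
  assumes "in_subdiff_at_0 J p" "J 0 = 0"
  shows "ereal (blinfun_apply u p) \<le> J u"
  using assms by (simp add: in_subdiff_at_0_def)

lemma pairing_le_of_conj_at_predual_nonpos:
  assumes "conj_at_predual J r \<le> 0"
  shows "ereal (blinfun_apply u r) \<le> J u"
proof -
  have "ereal (blinfun_apply u r) - J u \<le> conj_at_predual J r"
    unfolding conj_at_predual_def by (rule SUP_upper) simp
  also have "\<dots> \<le> 0"
    by (rule assms)
  finally have "ereal (blinfun_apply u r) - J u \<le> 0" .
  then show ?thesis
    by (cases "J u") auto
qed

lemma source_condition_pairing_bound:
  assumes adj: "\<And>u y. inner (A u) y = blinfun_apply u (blinfun_apply B y)"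
    and p: "p = \<tau> *\<^sub>R r + blinfun_apply B w" and "0 \<le> \<tau>"
    and "blinfun_apply v r \<le> blinfun_apply v p"
  shows "(1 - \<tau>) * blinfun_apply v p \<le> norm (A v) * norm w"
proof -
  have "blinfun_apply v p = \<tau> * blinfun_apply v r + inner (A v) w"
    by (simp add: p adj blinfun.add_right blinfun.scaleR_right)
  also have "\<dots> \<le> \<tau> * blinfun_apply v p + norm (A v) * norm w"
    using assms(3,4) norm_cauchy_schwarz[of "A v" w] by (intro add_mono mult_left_mono) auto
  finally show ?thesis
    by (simp add: algebra_simps)
qed

lemma coercive_ereal_bounded_on_sublevel:
  assumes "coercive_ereal F" "\<And>u. u \<in> S \<Longrightarrow> F u \<le> ereal M"
  shows "\<exists>R\<ge>0. \<forall>u\<in>S. norm u \<le> R"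
proof -
  obtain R0 where R0: "\<And>u. R0 \<le> norm u \<Longrightarrow> ereal (M + 1) \<le> F u"
    using assms(1) unfolding coercive_ereal_def by blast
  have "norm u \<le> max R0 0" if "u \<in> S" for u
  proof (rule ccontr)
    assume "\<not> norm u \<le> max R0 0"
    then have "ereal (M + 1) \<le> F u"
      by (intro R0) simp
    also have "\<dots> \<le> ereal M"
      using that by (rule assms(2))
    finally have "ereal (M + 1) \<le> ereal M" .
    then show False
      by simp
  qed
  then show ?thesis
    by (intro exI[of _ "max R0 0"]) auto
qed

theorem theorem2:
  fixes B :: "'y::{real_inner, complete_space} \<Rightarrow>\<^sub>L 'z::banach"
    and A :: "('z \<Rightarrow>\<^sub>L real) \<Rightarrow> 'y"
    and J :: "('z \<Rightarrow>\<^sub>L real) \<Rightarrow> ereal"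
    and f :: 'y and p :: 'z and w :: 'y and \<tau> :: real
  assumes metr: "weak_star_metrizable_on_bounded TYPE('z \<Rightarrow>\<^sub>L real)"
    and adj: "\<And>u y. inner (A u) y = blinfun_apply u (blinfun_apply B y)"
    and Jconv: "convex_ereal J"
    and Jhom: "abs_one_homogeneous J"
    and Jconj: "\<exists>G. proper_fun G \<and> J = conj_on_dual G"
    and coer: "coercive_ereal (\<lambda>u. ereal (1/2 * (norm (A u))\<^sup>2) + J u)"
    and p_sub: "in_subdiff_at_0 J p"
    and tau: "0 < \<tau>" "\<tau> < 1"
    and src: "conj_at_predual J ((1 / \<tau>) *\<^sub>R (p - blinfun_apply B w)) = 0"
  shows "\<exists>u. J u = ereal (blinfun_apply u p) \<and>
           (\<forall>v. J v = ereal (blinfun_apply v p) \<longrightarrow>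
              1/2 * (norm (A u - f))\<^sup>2 \<le> 1/2 * (norm (A v - f))\<^sup>2)"
proof -
  obtain G where JG: "J = conj_on_dual G"
    using Jconj by blast
  have J0: "J 0 = 0"
    using Jhom by (rule abs_one_homogeneous_zero)
  define Fe where "Fe = {u. J u \<le> ereal (blinfun_apply u p)}"
  have feasible_iff: "u \<in> Fe \<longleftrightarrow> J u = ereal (blinfun_apply u p)" for u
    using in_subdiff_at_0_pairing_le[OF p_sub J0, of u] by (auto simp: Fe_def)
  define r where "r = (1 / \<tau>) *\<^sub>R (p - blinfun_apply B w)"
  define s0 where "s0 = norm (A 0 - f)"
  define c where "c = s0 + norm f"
  have energy_bound: "ereal (1/2 * (norm (A v))\<^sup>2) + J v \<le> ereal (1/2 * c\<^sup>2 + c * norm w / (1 - \<tau>))"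
    if v: "v \<in> {v \<in> Fe. norm (A v - f) \<le> s0}" for v
  proof -
    have Av: "norm (A v) \<le> c"
      using norm_triangle_ineq[of "A v - f" f] v by (simp add: c_def)
    have "ereal (blinfun_apply v r) \<le> J v"
      using src by (intro pairing_le_of_conj_at_predual_nonpos) (simp add: r_def)
    then have "(1 - \<tau>) * blinfun_apply v p \<le> norm (A v) * norm w"
      using v tau feasible_iff[of v]
      by (intro source_condition_pairing_bound[OF adj, of p \<tau> r]) (auto simp: r_def)
    also have "\<dots> \<le> c * norm w"
      using Av by (simp add: mult_right_mono)
    finally have "blinfun_apply v p \<le> c * norm w / (1 - \<tau>)"
      using tau by (simp add: pos_le_divide_eq mult.commute)
    moreover have "(norm (A v))\<^sup>2 \<le> c\<^sup>2"
      using Av by (simp add: power_mono)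
    ultimately show ?thesis
      using v feasible_iff[of v] by simp
  qed
  obtain R where R: "0 \<le> R" "\<forall>v \<in> {v \<in> Fe. norm (A v - f) \<le> s0}. norm v \<le> R"
    using coercive_ereal_bounded_on_sublevel[OF coer energy_bound] by blast
  have "\<exists>u\<in>Fe. \<forall>v\<in>Fe. norm (A u - f) \<le> norm (A v - f)"
  proof (rule direct_method_closedin)
    show "closedin weak_star_topology Fe"
      unfolding Fe_def JG by (rule closedin_weak_star_conj_on_dual_le)
    show "0 \<in> Fe"
      using J0 by (simp add: Fe_def)
    show "closedin weak_star_topology {u \<in> topspace weak_star_topology. norm (A u - f) \<le> s}" for s
      using closedin_weak_star_adjoint_residual_le[OF adj] by simp
    show "compactin weak_star_topology {u. norm u \<le> R}"
      using R(1) by (rule compactin_weak_star_closed_ball)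
    show "{u \<in> Fe. norm (A u - f) \<le> norm (A 0 - f)} \<subseteq> {u. norm u \<le> R}"
      using R(2) by (auto simp: s0_def)
  qed
  then show ?thesis
    using feasible_iff by (auto intro!: power_mono)
qed

end
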